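(* If $\Gamma\vdash t:\Diamond$, then $\Gamma\neq\emptyset$. In particular, there is no closed term of type $\Diamond$, and every term of type $\Diamond$ has a free variable.
   Context: Types: $\rho,\tau::=\Diamond\mid\mathbf{B}\mid\tau\multimap\rho\mid\tau\otimes\rho\mid\tau\times\rho\mid\mathbf{L}(\tau)$. Raw terms: $r,s,t::=x^\tau\mid c\mid\lambda x^\tau.\,t\mid\langle t,s\rangle\mid ts\mid\{t\}$, where each variable $x^\tau$ carries a type (infinitely many variables of each type), application associates to the left, terms are identified up to renaming of bound variables ($\lambda$ is the only binder), and the constants $c$ with their types are $\mathsf{tt},\mathsf{ff}:\mathbf{B}$; $\mathsf{nil}_\tau:\mathbf{L}(\tau)$; $\mathsf{cons}_\tau:\Diamond\multimap\tau\multimap\mathbf{L}(\tau)\multimap\mathbf{L}(\tau)$; $\otimes_{\tau,\rho}:\tau\multimap\rho\multimap\tau\otimes\rho$. A context is a finite set of typed variables; $\Gamma_1,\Gamma_2$ denotes $\Gamma_1\cup\Gamma_2$ and presupposes $\Gamma_1\cap\Gamma_2=\emptyset$; $x^\tau$ also denotes $\{x^\tau\}$. The relation $\Gamma\vdash t:\tau$ is inductively defined by: (Var) $\Gamma,x^\tau\vdash x:\tau$; (Const) $\Gamma\vdash c:\tau$ for a constant $c$ of type $\tau$; ($\multimap^+$) from $\Gamma\cup\{x^\tau\}\vdash t:\rho$ infer $\Gamma\vdash\lambda x^\tau.t:\tau\multimap\rho$; ($\multimap^-$) from $\Gamma_1\vdash t:\tau\multimap\rho$ and $\Gamma_2\vdash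 s:\tau$ infer $\Gamma_1,\Gamma_2\vdash ts:\rho$; ($\times^+$) from $\Gamma\vdash t:\tau$ and $\Gamma\vdash s:\rho$ infer $\Gamma\vdash\langle t,s\rangle:\tau\times\rho$; ($\times^-_1$) from $\Gamma\vdash t:\tau\times\rho$ infer $\Gamma\vdash t\,\mathsf{tt}:\tau$; ($\times^-_0$) from $\Gamma\vdash t:\tau\times\rho$ infer $\Gamma\vdash t\,\mathsf{ff}:\rho$; ($\mathbf{B}^-$) from $\Gamma_1\vdash t:\mathbf{B}$, $\Gamma_2\vdash s:\tau$, $\Gamma_2\vdash r:\tau$ infer $\Gamma_1,\Gamma_2\vdash t\langle s,r\rangle:\tau$; ($\otimes^-$) from $\Gamma_1\vdash t:\tau\otimes\rho$ and $\Gamma_2,x^\tau,y^\rho\vdash s:\sigma$ infer $\Gamma_1,\Gamma_2\vdash t(\lambda x^\tau.\lambda y^\rho.s):\sigma$; ($\mathbf{L}^-$) from $\Gamma\vdash t:\mathbf{L}(\tau)$ and $\emptyset\vdash s:\Diamond\multimap\tau\multimap\rho\multimap\rho$ infer $\Gamma\vdash t\{s\}:\rho\multimap\rho$. *)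

theory Defs
  imports Main
begin

datatype ty = Dia | Bool | Lolli ty ty | Tens ty ty | Prod ty ty | Lst ty

datatype const = CTT | CFF | CNil ty | CCons ty | CTensor ty ty

fun cty :: "const \<Rightarrow> ty" where
  "cty CTT = Bool"
| "cty CFF = Bool"
| "cty (CNil t) = Lst t"
| "cty (CCons t) = Lolli Dia (Lolli t (Lolli (Lst t) (Lst t)))"
| "cty (CTensor t r) = Lolli t (Lolli r (Tens t r))"

type_synonym var = "nat \<times> ty"

datatype trm = V var | C const | Lam var trm | Pair trm trm | App trm trm | Brace trm

fun fv :: "trm \<Rightarrow> var set" where
  "fv (V x) = {x}"
| "fv (C c) = {}"
| "fv (Lam x t) = fv t - {x}"
| "fv (Pair t s) = fv t \<union> fv s"
| "fv (App t s) = fv t \<union> fv s"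
| "fv (Brace t) = fv t"

inductive typing :: "var set \<Rightarrow> trm \<Rightarrow> ty \<Rightarrow> bool" where
  tVar: "finite \<Gamma> \<Longrightarrow> x \<notin> \<Gamma> \<Longrightarrow> typing (insert x \<Gamma>) (V x) (snd x)"
| tConst: "finite \<Gamma> \<Longrightarrow> typing \<Gamma> (C c) (cty c)"
| tLamI: "typing (\<Gamma> \<union> {x}) t \<rho> \<Longrightarrow> typing \<Gamma> (Lam x t) (Lolli (snd x) \<rho>)"
| tLamE: "typing \<Gamma>1 t (Lolli \<tau> \<rho>) \<Longrightarrow> typing \<Gamma>2 s \<tau> \<Longrightarrow> \<Gamma>1 \<inter> \<Gamma>2 = {}
          \<Longrightarrow> typing (\<Gamma>1 \<union> \<Gamma>2) (App t s) \<rho>"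
| tProdI: "typing \<Gamma> t \<tau> \<Longrightarrow> typing \<Gamma> s \<rho> \<Longrightarrow> typing \<Gamma> (Pair t s) (Prod \<tau> \<rho>)"
| tProdE1: "typing \<Gamma> t (Prod \<tau> \<rho>) \<Longrightarrow> typing \<Gamma> (App t (C CTT)) \<tau>"
| tProdE0: "typing \<Gamma> t (Prod \<tau> \<rho>) \<Longrightarrow> typing \<Gamma> (App t (C CFF)) \<rho>"
| tBoolE: "typing \<Gamma>1 t Bool \<Longrightarrow> typing \<Gamma>2 s \<tau> \<Longrightarrow> typing \<Gamma>2 r \<tau> \<Longrightarrow> \<Gamma>1 \<inter> \<Gamma>2 = {}
          \<Longrightarrow> typing (\<Gamma>1 \<union> \<Gamma>2) (App t (Pair s r)) \<tau>"
| tTensE: "typing \<Gamma>1 t (Tens \<tau> \<rho>) \<Longrightarrow> snd x = \<tau> \<Longrightarrow> snd y = \<rho> \<Longrightarrow>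
          x \<noteq> y \<Longrightarrow> x \<notin> \<Gamma>2 \<Longrightarrow> y \<notin> \<Gamma>2 \<Longrightarrow>
          typing (\<Gamma>2 \<union> {x, y}) s \<sigma> \<Longrightarrow> \<Gamma>1 \<inter> \<Gamma>2 = {}
          \<Longrightarrow> typing (\<Gamma>1 \<union> \<Gamma>2) (App t (Lam x (Lam y s))) \<sigma>"
| tListE: "typing \<Gamma> t (Lst \<tau>) \<Longrightarrow> typing {} s (Lolli Dia (Lolli \<tau> (Lolli \<rho> \<rho>)))
          \<Longrightarrow> typing \<Gamma> (App t (Brace s)) (Lolli \<rho> \<rho>)"

end

theory Submission
  imports Defs
begin

text \<open>Read types as propositions: \<open>Dia\<close> is false, \<open>Lolli\<close> is implication,
  \<open>Tens\<close> and \<open>Prod\<close> are conjunction, and \<open>Bool\<close> and \<open>Lst\<close> types are true.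
  Every constant has a true type and every typing rule is sound for this reading, so a term
  whose free variables all have true types has a true type. A term of type \<open>Dia\<close> must
  therefore have a free variable, and free variables lie in the context.\<close>

fun ty_true :: "ty \<Rightarrow> bool" where
  "ty_true Dia = False"
| "ty_true Bool = True"
| "ty_true (Lolli \<tau> \<rho>) = (ty_true \<tau> \<longrightarrow> ty_true \<rho>)"
| "ty_true (Tens \<tau> \<rho>) = (ty_true \<tau> \<and> ty_true \<rho>)"
| "ty_true (Prod \<tau> \<rho>) = (ty_true \<tau> \<and> ty_true \<rho>)"
| "ty_true (Lst \<tau>) = True"

lemma ty_true_cty: "ty_true (cty c)"
  by (cases c) auto

lemma typing_fv_subset: "typing \<Gamma> t \<tau> \<Longrightarrow> fv t \<subseteq> \<Gamma>"
  by (induction rule: typing.induct) auto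

lemma typing_ty_true:
  assumes "typing \<Gamma> t \<tau>" and "\<forall>x\<in>fv t. ty_true (snd x)"
  shows "ty_true \<tau>"
  using assms by (induction rule: typing.induct) (auto simp: ty_true_cty)

corollary typing_Dia_fv_nonempty: "typing \<Gamma> t Dia \<Longrightarrow> fv t \<noteq> {}"
  using typing_ty_true by fastforce

theorem lemma4p3:
  "(\<forall>\<Gamma> t. typing \<Gamma> t Dia \<longrightarrow> \<Gamma> \<noteq> {})
   \<and> (\<forall>t. \<not> typing {} t Dia)
   \<and> (\<forall>\<Gamma> t. typing \<Gamma> t Dia \<longrightarrow> fv t \<noteq> {})"
  using typing_Dia_fv_nonempty typing_fv_subset by blast

end
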